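(* Let $n\ge2$, $\beta_n=2^{1/(n-1)}$, and $p\in(0,1/2)$ with $p\ge\frac{\beta_n-1}{2\beta_n-1}$. Let $X_1,\dots,X_n$ be i.i.d. with $P(X_i=1)=P(X_i=-1)=p$, $P(X_i=0)=1-2p$. Then the optimal probability, over stopping times $\tau\in\{1,\dots,n\}$ with respect to the natural filtration, that either $X_\tau=1$ and $X_i\ne1$ for all $i>\tau$, or $X_\tau=-1$ and $X_i\ne-1$ for all $i>\tau$, is at least $2(2\beta_n-1)^{1-n}\ge 1/2$. *)

theory Defs
  imports Complex_Main "HOL-Library.FuncSet"
begin

text \<open>Discrete model of n i.i.d. variables X_1..X_n with values in {-1,0,1}:
 an outcome is a function x : nat => int, x i = X_i for i in {1..n}, extensional
 (x i = undefined) outside {1..n}.\<close>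

definition outcomes :: "nat \<Rightarrow> (nat \<Rightarrow> int) set" where
  "outcomes n = PiE {1..n} (\<lambda>_. {-1, 0, 1})"

definition single_prob :: "real \<Rightarrow> int \<Rightarrow> real" where
  "single_prob p v = (if v = 1 \<or> v = -1 then p else if v = 0 then 1 - 2 * p else 0)"

definition outcome_prob :: "nat \<Rightarrow> real \<Rightarrow> (nat \<Rightarrow> int) \<Rightarrow> real" where
  "outcome_prob n p x = (\<Prod>i\<in>{1..n}. single_prob p (x i))"

definition stopping_time :: "nat \<Rightarrow> ((nat \<Rightarrow> int) \<Rightarrow> nat) \<Rightarrow> bool" where
  "stopping_time n \<tau> \<longleftrightarrow>
     (\<forall>x\<in>outcomes n. \<tau> x \<in> {1..n}) \<and>
     (\<forall>x\<in>outcomes n. \<forall>y\<in>outcomes n. \<forall>k.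
        (\<forall>i\<in>{1..k}. x i = y i) \<longrightarrow> (\<tau> x = k \<longleftrightarrow> \<tau> y = k))"

definition success :: "nat \<Rightarrow> ((nat \<Rightarrow> int) \<Rightarrow> nat) \<Rightarrow> (nat \<Rightarrow> int) \<Rightarrow> bool" where
  "success n \<tau> x \<longleftrightarrow>
     (x (\<tau> x) = 1 \<and> (\<forall>i\<in>{\<tau> x<..n}. x i \<noteq> 1)) \<or>
     (x (\<tau> x) = -1 \<and> (\<forall>i\<in>{\<tau> x<..n}. x i \<noteq> -1))"

definition success_prob :: "nat \<Rightarrow> real \<Rightarrow> ((nat \<Rightarrow> int) \<Rightarrow> nat) \<Rightarrow> real" where
  "success_prob n p \<tau> = (\<Sum>x\<in>{x\<in>outcomes n. success n \<tau> x}. outcome_prob n p x)"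

definition optimal_success_prob :: "nat \<Rightarrow> real \<Rightarrow> real" where
  "optimal_success_prob n p = (SUP \<tau>\<in>{\<tau>. stopping_time n \<tau>}. success_prob n p \<tau>)"

end

theory Submission
  imports Defs
begin

text \<open>
  Stop at the first nonzero X_k with k \<ge> s (or at n if there is none). This wins exactly when
  the sign X_k does not recur, so with m = n - s + 1 it wins with probability at least
  \<Sum>j<m. 2 (1-2p)^j p (1-p)^(m-1-j) = 2 ((1-p)^m - (1-2p)^m) = 2 (1 - u^m)/(2 - u)^m,
  where u = (1-2p)/(1-p). The hypothesis on p says u \<le> v = 1/\<beta>, and v^(n-1) = 1/2.
  Take m minimal with u^m \<le> 1/2 and w = (1/2)^(1/m), so u \<le> w \<le> v. Since x^(m-1) \<ge> 1/2 on
  [u, w], the function (1 - x^m)/(2 - x)^m decreases there, hence is at least (1/2)/(2 - w)^m at u;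
  and (2 - w)^m \<le> (2 - v)^(n-1) because m = ln 2 / (- ln w) and ln (2 - x) / (- ln x) increases.
  Finally 1/(2 - v)^(n-1) = 2 (2\<beta> - 1)^(1-n) \<ge> 1/2.
\<close>

lemma mult_ln_ge_diff_one:
  fixes q :: real
  assumes "0 < q"
  shows "q - 1 \<le> q * ln q"
proof -
  have "- ln q \<le> 1/q - 1"
    using ln_le_minus_one[of "1/q"] assms by (simp add: ln_div)
  hence "q * (- ln q) \<le> q * (1/q - 1)"
    using assms by (intro mult_left_mono) auto
  thus ?thesis
    using assms by (simp add: algebra_simps)
qed

lemma ln_two_minus_div_neg_ln_mono:
  fixes a b :: real
  assumes "0 < a" "a \<le> b" "b < 1"
  shows "ln (2 - a) / - ln a \<le> ln (2 - b) / - ln b"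
proof (rule DERIV_nonneg_imp_nondecreasing[OF assms(2)])
  fix x assume "a \<le> x" "x \<le> b"
  hence x: "0 < x" "x < 1"
    using assms by auto
  let ?d = "(x * ln x + (2 - x) * ln (2 - x)) / (x * (2 - x) * (ln x)\<^sup>2)"
  have "DERIV (\<lambda>q. ln (2 - q) / - ln q) x :> ?d"
    using x by (auto intro!: derivative_eq_intros simp: power2_eq_square field_simps)
  moreover have "0 \<le> x * ln x + (2 - x) * ln (2 - x)"
    using mult_ln_ge_diff_one[of x] mult_ln_ge_diff_one[of "2 - x"] x by linarith
  hence "0 \<le> ?d"
    using x by simp
  ultimately show "\<exists>y. DERIV (\<lambda>q. ln (2 - q) / - ln q) x :> y \<and> 0 \<le> y"
    by blast
qed

lemma one_minus_power_div_two_minus_power_antimono: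
  fixes w u :: real and k :: nat
  assumes "0 < w" "w \<le> u" "u < 1" "1/2 \<le> w ^ k"
  shows "(1 - u ^ Suc k) / (2 - u) ^ Suc k \<le> (1 - w ^ Suc k) / (2 - w) ^ Suc k"
proof (rule DERIV_nonpos_imp_nonincreasing[OF assms(2)])
  fix x assume "w \<le> x" "x \<le> u"
  hence x: "0 < x" "x < 1" "1/2 \<le> x ^ k"
    using assms power_mono[of w x k] by auto
  let ?n = "real (Suc k) * (2 - x) ^ k * (1 - 2 * x ^ k)"
  have "DERIV (\<lambda>q. (1 - q ^ Suc k) / (2 - q) ^ Suc k) x :> ?n / ((2 - x) ^ Suc k)\<^sup>2"
  proof -
    have "DERIV (\<lambda>q. 1 - q ^ Suc k) x :> - (real (Suc k) * x ^ k)"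
      using DERIV_diff[OF DERIV_const DERIV_power_Suc[OF DERIV_ident]] by simp
    moreover have "DERIV (\<lambda>q. (2 - q) ^ Suc k) x :> - (real (Suc k) * (2 - x) ^ k)"
      using DERIV_power_Suc[OF DERIV_diff[OF DERIV_const DERIV_ident]] by simp
    ultimately have "DERIV (\<lambda>q. (1 - q ^ Suc k) / (2 - q) ^ Suc k) x :>
        (- (real (Suc k) * x ^ k) * (2 - x) ^ Suc k
          - - (real (Suc k) * (2 - x) ^ k) * (1 - x ^ Suc k)) / ((2 - x) ^ Suc k) ^ Suc (Suc 0)"
      using x by (intro DERIV_quotient) auto
    thus ?thesis
      by (simp add: power2_eq_square algebra_simps)
  qed
  moreover have "?n / ((2 - x) ^ Suc k)\<^sup>2 \<le> 0"
    using x by (intro divide_nonpos_nonneg mult_nonneg_nonpos) auto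
  ultimately show "\<exists>y. DERIV (\<lambda>q. (1 - q ^ Suc k) / (2 - q) ^ Suc k) x :> y \<and> y \<le> 0"
    by blast
qed

lemma two_minus_power_le_of_power_eq_half:
  fixes w v :: real and j N :: nat
  assumes "0 < w" "w \<le> v" "v < 1" "w ^ j = 1/2" "v ^ N = 1/2"
  shows "(2 - w) ^ j \<le> (2 - v) ^ N"
proof -
  have "ln w < 0" "ln v < 0"
    using assms by auto
  moreover have "real j * ln w = - ln 2" "real N * ln v = - ln 2"
    using arg_cong[OF assms(4), of ln] arg_cong[OF assms(5), of ln] assms(1,2)
    by (simp_all add: ln_realpow ln_div)
  ultimately have "real j = ln 2 / - ln w" "real N = ln 2 / - ln v"
    by (simp_all add: field_simps)
  moreover have "ln 2 * (ln (2 - w) / - ln w) \<le> ln 2 * (ln (2 - v) / - ln v)"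
    using ln_two_minus_div_neg_ln_mono[OF assms(1-3)] by (intro mult_left_mono) auto
  ultimately have "real j * ln (2 - w) \<le> real N * ln (2 - v)"
    by simp
  hence "ln ((2 - w) ^ j) \<le> ln ((2 - v) ^ N)"
    using assms by (simp add: ln_realpow)
  thus ?thesis
    using assms by simp
qed

lemma exists_power_crossing_half:
  fixes u :: real and N :: nat
  assumes "u ^ N \<le> 1/2"
  obtains k where "Suc k \<le> N" "u ^ Suc k \<le> 1/2" "1/2 \<le> u ^ k"
proof -
  define m where "m = (LEAST m. u ^ m \<le> 1/2)"
  have "u ^ m \<le> 1/2"
    unfolding m_def by (rule LeastI[of _ N]) (fact assms)
  moreover have "m \<le> N"
    unfolding m_def by (rule Least_le) (fact assms)
  moreover obtain k where "m = Suc k"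
    using \<open>u ^ m \<le> 1/2\<close> by (cases m) auto
  moreover have "1/2 \<le> u ^ k"
    using not_less_Least[of k "\<lambda>m. u ^ m \<le> 1/2"] \<open>m = Suc k\<close> unfolding m_def by fastforce
  ultimately show ?thesis
    using that by blast
qed

lemma exists_one_minus_power_div_ge:
  fixes u v :: real and N :: nat
  assumes "0 < u" "u \<le> v" "v < 1" "v ^ N = 1/2"
  shows "\<exists>m\<in>{1..N}. 1 / (2 - v) ^ N \<le> 2 * ((1 - u ^ m) / (2 - u) ^ m)"
proof -
  have "u ^ N \<le> 1/2"
    using power_mono[OF assms(2), of N] assms by simp
  then obtain k where k: "Suc k \<le> N" "u ^ Suc k \<le> 1/2" "1/2 \<le> u ^ k"
    by (rule exists_power_crossing_half)
  define m where "m = Suc k"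
  define w where "w = root m (1/2)"
  have w: "0 < w" "w ^ m = 1/2"
    unfolding w_def m_def by (simp, subst real_root_pow_pos2) simp_all
  have "u \<le> w"
    using k w assms(1) unfolding m_def by (intro power_le_imp_le_base[of u k w]) auto
  moreover have "w \<le> v"
  proof -
    have "v ^ N \<le> v ^ m"
      using k assms unfolding m_def by (intro power_decreasing) auto
    thus ?thesis
      using w assms unfolding m_def by (intro power_le_imp_le_base[of w k v]) auto
  qed
  ultimately have "1 / (2 - v) ^ N \<le> 1 / (2 - w) ^ m"
    using two_minus_power_le_of_power_eq_half[of w v m N] w assms by (intro divide_left_mono) auto
  also have "\<dots> = 2 * ((1 - w ^ m) / (2 - w) ^ m)"
    using w by simp
  also have "\<dots> \<le> 2 * ((1 - u ^ m) / (2 - u) ^ m)"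
    using one_minus_power_div_two_minus_power_antimono[of u w k] k assms \<open>u \<le> w\<close> \<open>w \<le> v\<close>
    unfolding m_def by (intro mult_left_mono) auto
  finally show ?thesis
    using k unfolding m_def by (intro bexI[of _ "Suc k"]) auto
qed

lemma exists_horizon_success_ge:
  fixes p v :: real and N :: nat
  assumes "0 < p" "p < 1/2" "v < 1" "v ^ N = 1/2" "(1 - 2*p) / (1 - p) \<le> v"
  shows "\<exists>m\<in>{1..N}. 1 / (2 - v) ^ N \<le> 2 * ((1 - p) ^ m - (1 - 2*p) ^ m)"
proof -
  define u where "u = (1 - 2*p) / (1 - p)"
  have "(1 - u ^ m) / (2 - u) ^ m = (1 - p) ^ m - (1 - 2*p) ^ m" for m
  proof -
    have "2 - u = 1 / (1 - p)"
      unfolding u_def using assms by (simp add: field_simps)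
    hence "(1 - u ^ m) / (2 - u) ^ m = (1 - u ^ m) * (1 - p) ^ m"
      by (simp add: power_divide)
    also have "\<dots> = (1 - p) ^ m - (u * (1 - p)) ^ m"
      by (simp only: power_mult_distrib left_diff_distrib mult_1)
    also have "u * (1 - p) = 1 - 2*p"
      unfolding u_def using assms by simp
    finally show ?thesis .
  qed
  moreover have "0 < u"
    unfolding u_def using assms by simp
  ultimately show ?thesis
    using exists_one_minus_power_div_ge[of u v N] assms unfolding u_def by simp
qed

lemma two_mul_powr_eq_inverse_power:
  fixes v :: real and N :: nat
  assumes "0 < v" "v < 1" "v ^ N = 1/2"
  shows "2 * (2 / v - 1) powr (- real N) = 1 / (2 - v) ^ N"
proof -
  have "(2 / v - 1) powr (- real N) = (v / (2 - v)) ^ N"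
    using assms by (simp add: powr_minus powr_realpow field_simps power_divide)
  thus ?thesis
    using assms by (simp add: power_divide)
qed

lemma half_le_inverse_two_minus_power:
  fixes v :: real and N :: nat
  assumes "0 < v" "v < 1" "v ^ N = 1/2"
  shows "1/2 \<le> 1 / (2 - v) ^ N"
proof -
  have "v * (2 - v) = 1 - (1 - v)\<^sup>2"
    by (simp add: power2_eq_square algebra_simps)
  moreover have "(1 - v)\<^sup>2 \<le> 1"
    using assms by (intro power_le_one) auto
  ultimately have "(v * (2 - v)) ^ N \<le> 1"
    using assms by (intro power_le_one) auto
  hence "(2 - v) ^ N \<le> 2"
    using assms by (simp add: power_mult_distrib)
  thus ?thesis
    using assms by (simp add: field_simps)
qed

definition threshold_rule :: "nat \<Rightarrow> nat \<Rightarrow> (nat \<Rightarrow> int) \<Rightarrow> nat" where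
  "threshold_rule n s x =
     (if \<exists>j\<in>{s..n}. x j \<noteq> 0 then LEAST j. s \<le> j \<and> x j \<noteq> 0 else n)"

lemma threshold_rule_eq_iff:
  "threshold_rule n s x = k \<longleftrightarrow>
     (k \<in> {s..n} \<and> x k \<noteq> 0 \<and> (\<forall>j\<in>{s..<k}. x j = 0)) \<or> (k = n \<and> (\<forall>j\<in>{s..n}. x j = 0))"
proof (cases "\<exists>j\<in>{s..n}. x j \<noteq> 0")
  case True
  then obtain j0 where j0: "j0 \<in> {s..n}" "x j0 \<noteq> 0"
    by blast
  define L where "L = (LEAST j. s \<le> j \<and> x j \<noteq> 0)"
  have L: "s \<le> L" "x L \<noteq> 0" "L \<le> j0"
    using LeastI[of "\<lambda>j. s \<le> j \<and> x j \<noteq> 0" j0] Least_le[of "\<lambda>j. s \<le> j \<and> x j \<noteq> 0" j0] j0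
    unfolding L_def by auto
  have L_min: "x j = 0" if "s \<le> j" "j < L" for j
    using that unfolding L_def using not_less_Least by blast
  have "L = k" if "s \<le> k" "x k \<noteq> 0" "\<forall>j\<in>{s..<k}. x j = 0" for k
  proof -
    have "\<not> k < L" "\<not> L < k"
      using that L L_min by auto
    thus ?thesis
      by simp
  qed
  moreover have "threshold_rule n s x = L"
    using True unfolding threshold_rule_def L_def by simp
  moreover have "L \<in> {s..n}" "\<forall>j\<in>{s..<L}. x j = 0"
    using L j0 L_min by auto
  moreover have "\<not> (\<forall>j\<in>{s..n}. x j = 0)"
    using j0 by auto
  ultimately show ?thesis
    using L(2) by (metis atLeastAtMost_iff)
next
  case False
  thus ?thesis
    unfolding threshold_rule_def by auto
qed

lemma stopping_time_threshold_rule: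
  assumes "1 \<le> s" "s \<le> n"
  shows "stopping_time n (threshold_rule n s)"
  unfolding stopping_time_def
proof (intro conjI ballI allI impI)
  fix x :: "nat \<Rightarrow> int"
  show "threshold_rule n s x \<in> {1..n}"
    using threshold_rule_eq_iff[of n s x "threshold_rule n s x"] assms by auto
next
  fix x y :: "nat \<Rightarrow> int" and k :: nat
  assume "\<forall>i\<in>{1..k}. x i = y i"
  hence "x i = y i" if "i \<in> {s..k}" for i
    using that assms by auto
  hence "(\<forall>j\<in>{s..<k}. x j = 0) \<longleftrightarrow> (\<forall>j\<in>{s..<k}. y j = 0)"
    and "k \<in> {s..n} \<Longrightarrow> x k = y k"
    and "k = n \<Longrightarrow> (\<forall>j\<in>{s..n}. x j = 0) \<longleftrightarrow> (\<forall>j\<in>{s..n}. y j = 0)"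
    by auto
  thus "threshold_rule n s x = k \<longleftrightarrow> threshold_rule n s y = k"
    unfolding threshold_rule_eq_iff by metis
qed

definition threshold_win_values :: "nat \<Rightarrow> nat \<Rightarrow> int \<Rightarrow> nat \<Rightarrow> int set" where
  "threshold_win_values s k \<sigma> i =
     (if i < s then {-1, 0, 1} else if i < k then {0} else if i = k then {\<sigma>} else {-1, 0, 1} - {\<sigma>})"

definition threshold_win_event :: "nat \<Rightarrow> nat \<Rightarrow> nat \<Rightarrow> int \<Rightarrow> (nat \<Rightarrow> int) set" where
  "threshold_win_event n s k \<sigma> = PiE {1..n} (threshold_win_values s k \<sigma>)"

lemma outcome_prob_nonneg:
  assumes "0 \<le> p" "p \<le> 1/2"
  shows "0 \<le> outcome_prob n p x"
  unfolding outcome_prob_def single_prob_def using assms by (intro prod_nonneg) auto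

lemma sum_outcome_prob_threshold_win_event:
  assumes "1 \<le> s" "s \<le> k" "k \<le> n" "\<sigma> \<in> {1, -1}"
  shows "sum (outcome_prob n p) (threshold_win_event n s k \<sigma>) = (1 - 2*p) ^ (k - s) * p * (1 - p) ^ (n - k)"
proof -
  define g where "g i = (if i < s then 1 else if i < k then 1 - 2*p else if i = k then p else 1 - p)" for i
  have "sum (outcome_prob n p) (threshold_win_event n s k \<sigma>) =
      (\<Prod>i\<in>{1..n}. sum (single_prob p) (threshold_win_values s k \<sigma> i))"
    unfolding outcome_prob_def threshold_win_event_def
    by (rule prod_sum_PiE[symmetric]) (auto simp: threshold_win_values_def)
  also have "\<dots> = prod g {1..<Suc n}"
    using assms(4) by (intro prod.cong)
      (auto simp: g_def threshold_win_values_def single_prob_def insert_Diff_if)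
  also have "\<dots> = prod g {1..<s} * prod g {s..<k} * prod g {k..<Suc n}"
    using assms by (simp add: prod.atLeastLessThan_concat)
  also have "prod g {k..<Suc n} = g k * prod g {Suc k..<Suc n}"
    using assms by (intro prod.atLeast_Suc_lessThan) simp
  also have "prod g {1..<s} = 1"
    by (intro prod.neutral) (simp add: g_def)
  also have "prod g {s..<k} = prod (\<lambda>_. 1 - 2*p) {s..<k}"
    by (intro prod.cong) (auto simp: g_def)
  also have "prod g {Suc k..<Suc n} = prod (\<lambda>_. 1 - p) {Suc k..<Suc n}"
    using assms by (intro prod.cong) (auto simp: g_def)
  finally show ?thesis
    using assms by (simp add: g_def)
qed

lemma threshold_win_event_success:
  assumes "1 \<le> s" "s \<le> k" "k \<le> n" "\<sigma> \<in> {1, -1}" "x \<in> threshold_win_event n s k \<sigma>"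
  shows "x \<in> outcomes n" "threshold_rule n s x = k" "x k = \<sigma>" "success n (threshold_rule n s) x"
proof -
  have x: "x i \<in> threshold_win_values s k \<sigma> i" if "i \<in> {1..n}" for i
    by (rule PiE_mem[OF assms(5)[unfolded threshold_win_event_def] that])
  have "threshold_win_event n s k \<sigma> \<subseteq> outcomes n"
    using assms(4) unfolding threshold_win_event_def outcomes_def
    by (intro PiE_mono) (auto simp: threshold_win_values_def)
  thus "x \<in> outcomes n"
    using assms(5) by blast
  show "x k = \<sigma>"
    using x[of k] assms by (auto simp: threshold_win_values_def)
  moreover have "\<forall>j\<in>{s..<k}. x j = 0"
  proof
    fix j assume "j \<in> {s..<k}"
    thus "x j = 0"
      using x[of j] assms(1,3) by (auto simp: threshold_win_values_def)
  qed
  ultimately show "threshold_rule n s x = k"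
    using assms unfolding threshold_rule_eq_iff by auto
  moreover have "\<forall>i\<in>{k<..n}. x i \<noteq> \<sigma>"
  proof
    fix i assume "i \<in> {k<..n}"
    thus "x i \<noteq> \<sigma>"
      using x[of i] assms(1,2) by (auto simp: threshold_win_values_def)
  qed
  ultimately show "success n (threshold_rule n s) x"
    using \<open>x k = \<sigma>\<close> assms(4) unfolding success_def by auto
qed

lemma success_prob_threshold_rule_ge:
  assumes "1 \<le> s" "s \<le> n" "0 \<le> p" "p \<le> 1/2"
  shows "2 * ((1 - p) ^ Suc (n - s) - (1 - 2*p) ^ Suc (n - s)) \<le> success_prob n p (threshold_rule n s)"
proof -
  define K where "K = {..n - s} \<times> {1, -1::int}"
  define E where "E c = threshold_win_event n s (s + fst c) (snd c)" for c
  have E: "x \<in> outcomes n" "threshold_rule n s x = s + fst c" "x (s + fst c) = snd c"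
    "success n (threshold_rule n s) x" if "c \<in> K" "x \<in> E c" for c x
    using threshold_win_event_success[of s "s + fst c" n "snd c" x] that assms
    unfolding K_def E_def by auto
  have fin_outcomes: "finite (outcomes n)"
    unfolding outcomes_def by (auto intro!: finite_PiE)
  have "\<forall>c\<in>K. finite (E c)"
    using E(1) by (meson fin_outcomes finite_subset subsetI)
  moreover have "\<forall>c\<in>K. \<forall>d\<in>K. c \<noteq> d \<longrightarrow> E c \<inter> E d = {}"
    using E(2,3) by (metis disjoint_iff add_left_cancel prod_eqI)
  ultimately have "(\<Sum>c\<in>K. sum (outcome_prob n p) (E c)) = sum (outcome_prob n p) (\<Union>(E ` K))"
    by (intro sum.UNION_disjoint[symmetric]) (auto simp: K_def)
  also have "\<dots> \<le> success_prob n p (threshold_rule n s)"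
    unfolding success_prob_def using E fin_outcomes outcome_prob_nonneg[OF assms(3,4)]
    by (intro sum_mono2) auto
  finally have "(\<Sum>c\<in>K. sum (outcome_prob n p) (E c)) \<le> success_prob n p (threshold_rule n s)" .
  moreover have "(\<Sum>c\<in>K. sum (outcome_prob n p) (E c)) =
      2 * p * (\<Sum>j<Suc (n - s). (1 - 2*p) ^ j * (1 - p) ^ (n - s - j))"
    using assms(1,2)
    by (simp add: K_def E_def sum.cartesian_product' sum_outcome_prob_threshold_win_event
        lessThan_Suc_atMost sum_distrib_left algebra_simps)
  moreover have "(1 - 2*p) ^ Suc (n - s) - (1 - p) ^ Suc (n - s) =
      - p * (\<Sum>j<Suc (n - s). (1 - 2*p) ^ j * (1 - p) ^ (n - s - j))"
    using diff_power_eq_sum[of "1 - 2*p" "n - s" "1 - p"] by simp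
  ultimately show ?thesis
    by (simp add: algebra_simps)
qed

lemma success_prob_le_optimal_success_prob:
  assumes "stopping_time n \<tau>" "0 \<le> p" "p \<le> 1/2"
  shows "success_prob n p \<tau> \<le> optimal_success_prob n p"
  unfolding optimal_success_prob_def
proof (rule cSUP_upper)
  have "finite (outcomes n)"
    unfolding outcomes_def by (auto intro!: finite_PiE)
  hence "success_prob n p \<tau>' \<le> sum (outcome_prob n p) (outcomes n)" for \<tau>'
    unfolding success_prob_def using outcome_prob_nonneg[OF assms(2,3)] by (intro sum_mono2) auto
  thus "bdd_above (success_prob n p ` {\<tau>. stopping_time n \<tau>})"
    by (intro bdd_aboveI2)
qed (use assms in simp)

theorem mainTheorem10:
  fixes n :: nat and p :: real
  assumes "n \<ge> 2"
    and "0 < p" and "p < 1/2"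
    and "p \<ge> (2 powr (1 / real (n - 1)) - 1) / (2 * 2 powr (1 / real (n - 1)) - 1)"
  shows "optimal_success_prob n p \<ge> 2 * (2 * 2 powr (1 / real (n - 1)) - 1) powr (1 - real n)
       \<and> 2 * (2 * 2 powr (1 / real (n - 1)) - 1) powr (1 - real n) \<ge> 1/2"
proof -
  define N where "N = n - 1"
  define \<beta> where "\<beta> = 2 powr (1 / real N)"
  define v where "v = 1 / \<beta>"
  have "1 < \<beta>"
    using assms(1) unfolding \<beta>_def N_def by simp
  moreover have "\<beta> ^ N = 2"
    using assms(1) unfolding \<beta>_def N_def by (simp add: powr_realpow[symmetric] powr_powr)
  ultimately have v: "0 < v" "v < 1" "v ^ N = 1/2" "2 / v - 1 = 2 * \<beta> - 1"
    unfolding v_def by (simp_all add: power_divide)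
  have "\<beta> - 1 \<le> p * (2 * \<beta> - 1)"
    using assms(4) \<open>1 < \<beta>\<close> unfolding \<beta>_def N_def by (simp add: pos_divide_le_eq mult.commute)
  hence "(1 - 2*p) / (1 - p) \<le> v"
    using assms(3) \<open>1 < \<beta>\<close> unfolding v_def by (simp add: field_simps)
  then obtain m where m: "m \<in> {1..N}" "1 / (2 - v) ^ N \<le> 2 * ((1 - p) ^ m - (1 - 2*p) ^ m)"
    using exists_horizon_success_ge[OF assms(2,3) v(2,3)] by blast
  define s where "s = n - m + 1"
  have s: "1 \<le> s" "s \<le> n" "Suc (n - s) = m"
    using m(1) assms(1) unfolding s_def N_def by auto
  have bound_eq: "2 * (2 * \<beta> - 1) powr (1 - real n) = 1 / (2 - v) ^ N"
    using two_mul_powr_eq_inverse_power[OF v(1-3)] v(4) assms(1) unfolding N_def by simp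
  also have "\<dots> \<le> 2 * ((1 - p) ^ Suc (n - s) - (1 - 2*p) ^ Suc (n - s))"
    using m(2) s(3) by simp
  also have "\<dots> \<le> success_prob n p (threshold_rule n s)"
    using success_prob_threshold_rule_ge[OF s(1,2)] assms(2,3) by simp
  also have "\<dots> \<le> optimal_success_prob n p"
    using success_prob_le_optimal_success_prob[OF stopping_time_threshold_rule[OF s(1,2)]] assms(2,3)
    by simp
  finally show ?thesis
    using half_le_inverse_two_minus_power[OF v(1-3)] bound_eq
    unfolding N_def[symmetric] \<beta>_def[symmetric] by simp
qed

end
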